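(* Let $N$ be a coupled $s$-square network with at least two reactions, none of which is an inflow or outflow reaction, in which every species has total molecularity at most two, and suppose $\operatorname{Or}(N)\ne0$. Then every reaction of $N$ has the form $A+B\to0$ or $A\to B$ for two distinct species $A,B$ of $N$.
   Context: A square ($s$-square) network is a list of $s$ reactions $y_k\to y'_k$ ($y_k,y'_k\in\mathbb{Z}^s_{\ge0}$, $y_k\ne y'_k$) on $s$ species, each species occurring in some complex. Inflow/outflow reactions are $0\to X_i$ and $X_i\to 0$. A network is coupled if its reactions cannot be split into two nonempty sets involving disjoint sets of species. Total molecularity: list the non-flow reactions as non-reversible ones $y_j\to y_j'$ plus each reversible pair $y_j\rightleftarrows y_j'$ once; $\operatorname{TM}(X_i)=\sum_j(y_{ji}+y'_{ji})$. Orientation: $\operatorname{Or}(N)=\operatorname{sign}(\det M\det R)$ where $M$ has rows $y_k$ and $R$ has rows $y_k-y'_k$. *)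

theory Defs
  imports "HOL-Analysis.Analysis"
begin

text \<open>Species are the elements of a finite type 's; s = CARD('s).
  A square network is given by reactant and product complexes
  y k, y' k :: 's \<Rightarrow> nat for reaction index k :: 's (a list of s reactions).\<close>

definition unit_cplx :: "'s \<Rightarrow> ('s \<Rightarrow> nat)" where
  "unit_cplx A = (\<lambda>j. if j = A then 1 else 0)"

definition is_flow :: "('s \<Rightarrow> nat) \<Rightarrow> ('s \<Rightarrow> nat) \<Rightarrow> bool" where
  "is_flow a b \<longleftrightarrow> (a = (\<lambda>_. 0) \<and> (\<exists>i. b = unit_cplx i)) \<or> (b = (\<lambda>_. 0) \<and> (\<exists>i. a = unit_cplx i))"

definition rxn_species :: "('k \<Rightarrow> 's \<Rightarrow> nat) \<Rightarrow> ('k \<Rightarrow> 's \<Rightarrow> nat) \<Rightarrow> 'k \<Rightarrow> 's set" where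
  "rxn_species y y' k = {i. y k i \<noteq> 0 \<or> y' k i \<noteq> 0}"

definition square_network :: "('s::finite \<Rightarrow> 's \<Rightarrow> nat) \<Rightarrow> ('s \<Rightarrow> 's \<Rightarrow> nat) \<Rightarrow> bool" where
  "square_network y y' \<longleftrightarrow> (\<forall>k. y k \<noteq> y' k) \<and> (\<forall>i. \<exists>k. i \<in> rxn_species y y' k)"

definition coupled :: "('k \<Rightarrow> 's \<Rightarrow> nat) \<Rightarrow> ('k \<Rightarrow> 's \<Rightarrow> nat) \<Rightarrow> bool" where
  "coupled y y' \<longleftrightarrow> \<not> (\<exists>K1 K2. K1 \<union> K2 = UNIV \<and> K1 \<inter> K2 = {} \<and> K1 \<noteq> {} \<and> K2 \<noteq> {} \<and>
      (\<Union>k\<in>K1. rxn_species y y' k) \<inter> (\<Union>k\<in>K2. rxn_species y y' k) = {})"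

text \<open>Total molecularity: non-flow reactions, with a reaction and its reverse
  identified (each reversible pair counted once), i.e. summing over the set of
  unordered pairs {y_k, y'_k}.\<close>
definition total_molecularity :: "('k \<Rightarrow> 's \<Rightarrow> nat) \<Rightarrow> ('k \<Rightarrow> 's \<Rightarrow> nat) \<Rightarrow> 's \<Rightarrow> nat" where
  "total_molecularity y y' i =
     (\<Sum>C\<in>{{y k, y' k} | k. \<not> is_flow (y k) (y' k)}. \<Sum>c\<in>C. c i)"

definition complex_matrix :: "('s::finite \<Rightarrow> 's \<Rightarrow> nat) \<Rightarrow> int^'s^'s" where
  "complex_matrix y = (\<chi> k i. int (y k i))"

definition reaction_matrix :: "('s::finite \<Rightarrow> 's \<Rightarrow> nat) \<Rightarrow> ('s \<Rightarrow> 's \<Rightarrow> nat) \<Rightarrow> int^'s^'s" where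
  "reaction_matrix y y' = (\<chi> k i. int (y k i) - int (y' k i))"

definition orientation :: "('s::finite \<Rightarrow> 's \<Rightarrow> nat) \<Rightarrow> ('s \<Rightarrow> 's \<Rightarrow> nat) \<Rightarrow> int" where
  "orientation y y' = sgn (det (complex_matrix y) * det (reaction_matrix y y'))"

end

theory Submission
  imports Defs
begin

(* A nonzero orientation means that both the complex matrix M and the
   reaction matrix R are nonsingular.  Nonsingularity of M forbids the zero reactant
   complex and repeated reactant complexes; nonsingularity of R forbids a reaction
   together with its reverse.  Hence the s reactions give s distinct unordered
   complex pairs, and the total molecularity of species i is simply
   sum_k (y_k i + y'_k i).  Summing over all species, the total size of all
   reactions is at most 2s; since a non-flow reaction has size at least 2, every
   reaction has size exactly 2.  The reactions of size 2 with nonzero reactant are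
   A + B -> 0, A -> B and 2A -> 0; the last one uses up the molecularity budget of A,
   so it shares no species with any other reaction, contradicting coupledness. *)

definition molecularity :: "('s::finite \<Rightarrow> nat) \<Rightarrow> nat" where
  "molecularity c = sum c UNIV"

lemma molecularity_eq_0_iff: "molecularity c = 0 \<longleftrightarrow> c = (\<lambda>_. 0)"
  by (auto simp: molecularity_def fun_eq_iff)

lemma molecularity_eq_1:
  assumes "molecularity c = 1"
  obtains A where "c = unit_cplx A"
proof -
  obtain A where A: "c A \<noteq> 0"
    using assms by (metis molecularity_eq_0_iff zero_neq_one)
  have "molecularity c = c A + sum c (UNIV - {A})"
    by (simp add: molecularity_def sum.remove)
  with assms A have "c A = 1" and "sum c (UNIV - {A}) = 0"
    by linarith+
  hence "c = unit_cplx A"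
    by (auto simp: unit_cplx_def fun_eq_iff)
  thus thesis by (rule that)
qed

lemma molecularity_eq_2:
  assumes "molecularity c = 2"
  obtains A B where "c = (\<lambda>j. unit_cplx A j + unit_cplx B j)"
proof -
  obtain A where A: "c A \<noteq> 0"
    using assms by (metis molecularity_eq_0_iff zero_neq_numeral)
  define d where "d = (\<lambda>j. c j - unit_cplx A j)"
  have c_split: "c = (\<lambda>j. unit_cplx A j + d j)"
    using A by (auto simp: d_def unit_cplx_def fun_eq_iff)
  have "molecularity c = sum (unit_cplx A) UNIV + molecularity d"
    by (subst c_split) (simp add: molecularity_def sum.distrib)
  moreover have "sum (unit_cplx A) UNIV = 1"
    by (simp add: unit_cplx_def)
  ultimately have "molecularity d = 1"
    using assms by simp
  then obtain B where "d = unit_cplx B"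
    by (rule molecularity_eq_1)
  with c_split show thesis by (intro that) simp
qed

lemma non_flow_molecularity_ge_2:
  assumes "\<not> is_flow a b" and "a \<noteq> b"
  shows "2 \<le> molecularity a + molecularity b"
proof (rule ccontr)
  assume "\<not> ?thesis"
  hence "molecularity a = 0 \<and> molecularity b \<le> 1 \<or> molecularity a = 1 \<and> molecularity b = 0"
    by linarith
  thus False
  proof
    assume small: "molecularity a = 0 \<and> molecularity b \<le> 1"
    hence a0: "a = (\<lambda>_. 0)"
      by (simp add: molecularity_eq_0_iff)
    with \<open>a \<noteq> b\<close> have "molecularity b \<noteq> 0"
      by (auto simp: molecularity_eq_0_iff)
    with small obtain B where "b = unit_cplx B"
      by (metis le_neq_implies_less less_one molecularity_eq_1)
    with a0 \<open>\<not> is_flow a b\<close> show False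
      by (auto simp: is_flow_def)
  next
    assume "molecularity a = 1 \<and> molecularity b = 0"
    then obtain A where "a = unit_cplx A" and "b = (\<lambda>_. 0)"
      by (metis molecularity_eq_0_iff molecularity_eq_1)
    with \<open>\<not> is_flow a b\<close> show False
      by (auto simp: is_flow_def)
  qed
qed

lemma reactions_of_size_2:
  assumes size: "molecularity a + molecularity b = 2"
    and "a \<noteq> (\<lambda>_. 0)" and "a \<noteq> b"
  obtains (distinct) A B where "A \<noteq> B"
      "a = (\<lambda>j. unit_cplx A j + unit_cplx B j) \<and> b = (\<lambda>_. 0) \<or> a = unit_cplx A \<and> b = unit_cplx B"
    | (dimer) A where "a = (\<lambda>j. unit_cplx A j + unit_cplx A j)" and "b = (\<lambda>_. 0)"
proof -
  have "molecularity a \<noteq> 0"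
    using assms(2) by (simp add: molecularity_eq_0_iff)
  with size consider "molecularity a = 1" "molecularity b = 1"
    | "molecularity a = 2" "molecularity b = 0"
    by linarith
  thus thesis
  proof cases
    case 1
    then obtain A B where "a = unit_cplx A" "b = unit_cplx B"
      by (metis molecularity_eq_1)
    moreover from this \<open>a \<noteq> b\<close> have "A \<noteq> B"
      by blast
    ultimately show thesis
      using distinct by blast
  next
    case 2
    then obtain A B where a: "a = (\<lambda>j. unit_cplx A j + unit_cplx B j)"
      by (metis molecularity_eq_2)
    from 2 have b: "b = (\<lambda>_. 0)"
      by (simp add: molecularity_eq_0_iff)
    show thesis
    proof (cases "A = B")
      case True
      with a b dimer show thesis by blast
    next
      case False
      with a b distinct show thesis by blast
    qed
  qed
qed

lemma det_opposite_rows: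
  fixes A :: "'a::{idom, ring_char_0}^'n::finite^'n"
  assumes "i \<noteq> j" and opposite: "row i A = - row j A"
  shows "det A = 0"
proof -
  have "det A = det (\<chi> k. if k = i then row i A + 1 *s row j A else row k A)"
    using det_row_operation[OF \<open>i \<noteq> j\<close>, of A 1] by simp
  also have "\<dots> = 0"
  proof (rule det_zero_row(1)[of i])
    have "\<And>m. A $ i $ m = - (A $ j $ m)"
      using opposite by (simp add: row_def vec_eq_iff)
    thus "row i (\<chi> k. if k = i then row i A + 1 *s row j A else row k A) = 0"
      by (simp add: row_def vec_eq_iff)
  qed
  finally show ?thesis .
qed

lemma reactant_nonzero:
  assumes "det (complex_matrix y) \<noteq> 0"
  shows "y k \<noteq> (\<lambda>_. 0)"
proof
  assume "y k = (\<lambda>_. 0)"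
  hence "row k (complex_matrix y) = 0"
    by (simp add: row_def complex_matrix_def vec_eq_iff)
  with assms det_zero_row(1) show False by blast
qed

text \<open>If M and R are nonsingular, distinct reactions have distinct unordered complex
  pairs: equal reactants give equal rows of M, and a reaction together with its
  reverse gives opposite rows of R.\<close>
lemma reaction_pairs_inj:
  assumes M: "det (complex_matrix y) \<noteq> 0" and R: "det (reaction_matrix y y') \<noteq> 0"
  shows "inj (\<lambda>k. {y k, y' k})"
proof (rule injI, rule ccontr)
  fix k j
  assume pairs: "{y k, y' k} = {y j, y' j}" and "k \<noteq> j"
  show False
  proof (cases "y k = y j")
    case True
    hence "row k (complex_matrix y) = row j (complex_matrix y)"
      by (simp add: row_def complex_matrix_def vec_eq_iff)
    with M det_identical_rows \<open>k \<noteq> j\<close> show False by blast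
  next
    case False
    with pairs have "y k = y' j" "y' k = y j"
      by (auto simp: doubleton_eq_iff)
    hence "row k (reaction_matrix y y') = - row j (reaction_matrix y y')"
      by (simp add: row_def reaction_matrix_def vec_eq_iff)
    with R det_opposite_rows \<open>k \<noteq> j\<close> show False by blast
  qed
qed

lemma total_molecularity_eq_sum:
  fixes y y' :: "'k::finite \<Rightarrow> 's \<Rightarrow> nat"
  assumes no_flow: "\<forall>k. \<not> is_flow (y k) (y' k)" and proper: "\<forall>k. y k \<noteq> y' k"
    and inj: "inj (\<lambda>k. {y k, y' k})"
  shows "total_molecularity y y' i = (\<Sum>k\<in>UNIV. y k i + y' k i)"
proof -
  have "{{y k, y' k} | k. \<not> is_flow (y k) (y' k)} = range (\<lambda>k. {y k, y' k})"
    using no_flow by auto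
  thus ?thesis
    unfolding total_molecularity_def
    by (simp add: sum.reindex[OF inj] proper)
qed

lemma all_eq_2_if_sum_le:
  fixes f :: "'k::finite \<Rightarrow> nat"
  assumes ge: "\<And>k. 2 \<le> f k" and le: "sum f UNIV \<le> 2 * CARD('k)"
  shows "f k = 2"
proof (rule ccontr)
  assume "f k \<noteq> 2"
  with ge have "2 < f k" by (simp add: order_less_le)
  hence "(\<Sum>k\<in>(UNIV::'k set). 2) < sum f UNIV"
    using ge by (intro sum_strict_mono_ex1) auto
  with le show False by simp
qed

lemma coupled_shares_species:
  assumes "coupled y y'" and "j \<noteq> k"
  obtains j' where "j' \<noteq> k" and "rxn_species y y' k \<inter> rxn_species y y' j' \<noteq> {}"
proof -
  let ?species = "\<lambda>K. \<Union>i\<in>K. rxn_species y y' i"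
  have "?species {k} \<inter> ?species (UNIV - {k}) \<noteq> {}"
  proof
    assume disjoint: "?species {k} \<inter> ?species (UNIV - {k}) = {}"
    have "UNIV - {k} \<noteq> {}"
      using \<open>j \<noteq> k\<close> by blast
    with disjoint have "\<exists>K1 K2. K1 \<union> K2 = UNIV \<and> K1 \<inter> K2 = {} \<and> K1 \<noteq> {} \<and> K2 \<noteq> {} \<and>
        ?species K1 \<inter> ?species K2 = {}"
      by (intro exI[of _ "{k}"] exI[of _ "UNIV - {k}"]) auto
    with \<open>coupled y y'\<close> show False
      unfolding coupled_def by blast
  qed
  then obtain j' where "j' \<noteq> k" and "rxn_species y y' k \<inter> rxn_species y y' j' \<noteq> {}"
    by blast
  thus thesis
    by (rule that)
qed

text \<open>In a coupled network with at least two reactions, in which no species has total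
  molecularity above 2, there is no reaction 2A \<rightarrow> 0: it would exhaust the
  molecularity of A and so share no species with any other reaction.\<close>
lemma no_dimerisation_to_zero:
  fixes y y' :: "'k::finite \<Rightarrow> 's \<Rightarrow> nat"
  assumes "coupled y y'" and "2 \<le> CARD('k)"
    and TM: "\<And>i. total_molecularity y y' i = (\<Sum>k\<in>UNIV. y k i + y' k i)"
    and TM_le: "total_molecularity y y' A \<le> 2"
    and yk: "y k = (\<lambda>j. unit_cplx A j + unit_cplx A j)" and y'k: "y' k = (\<lambda>_. 0)"
  shows False
proof -
  have "total_molecularity y y' A = (y k A + y' k A) + (\<Sum>j\<in>UNIV - {k}. y j A + y' j A)"
    unfolding TM by (rule sum.remove) auto
  moreover have "y k A + y' k A = 2"
    by (simp add: yk y'k unit_cplx_def)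
  ultimately have "(\<Sum>j\<in>UNIV - {k}. y j A + y' j A) = 0"
    using TM_le by linarith
  hence A_only_in_k: "A \<notin> rxn_species y y' j" if "j \<noteq> k" for j
    using that by (simp add: rxn_species_def)
  have species_k: "rxn_species y y' k = {A}"
    by (auto simp: rxn_species_def yk y'k unit_cplx_def)
  have "UNIV \<noteq> {k}"
  proof
    assume "UNIV = {k}"
    hence "CARD('k) = 1" by (metis card_1_singleton_iff One_nat_def)
    with \<open>2 \<le> CARD('k)\<close> show False by simp
  qed
  then obtain j where "j \<noteq> k"
    by blast
  then obtain j' where "j' \<noteq> k" and "rxn_species y y' k \<inter> rxn_species y y' j' \<noteq> {}"
    using coupled_shares_species[OF \<open>coupled y y'\<close>] by blast
  with species_k have "A \<in> rxn_species y y' j'"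
    by auto
  with A_only_in_k \<open>j' \<noteq> k\<close> show False
    by blast
qed

theorem mainTheorem9:
  fixes y y' :: "'s::finite \<Rightarrow> 's \<Rightarrow> nat"
  assumes "square_network y y'"
    and "coupled y y'"
    and "CARD('s) \<ge> 2"
    and "\<forall>k. \<not> is_flow (y k) (y' k)"
    and "\<forall>i. total_molecularity y y' i \<le> 2"
    and "orientation y y' \<noteq> 0"
  shows "\<forall>k. \<exists>A B. A \<noteq> B \<and>
           ((y k = (\<lambda>j. unit_cplx A j + unit_cplx B j) \<and> y' k = (\<lambda>_. 0)) \<or>
            (y k = unit_cplx A \<and> y' k = unit_cplx B))"
proof
  fix k
  have proper: "\<forall>k. y k \<noteq> y' k"
    using assms(1) by (simp add: square_network_def)
  have M: "det (complex_matrix y) \<noteq> 0" and R: "det (reaction_matrix y y') \<noteq> 0"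
    using assms(6) by (auto simp: orientation_def)
  note TM = total_molecularity_eq_sum[OF assms(4) proper reaction_pairs_inj[OF M R]]
  define size where "size k = molecularity (y k) + molecularity (y' k)" for k
  have "sum size UNIV = (\<Sum>k\<in>UNIV. \<Sum>i\<in>UNIV. y k i + y' k i)"
    by (simp add: size_def molecularity_def sum.distrib)
  also have "\<dots> = (\<Sum>i\<in>UNIV. total_molecularity y y' i)"
    unfolding TM by (rule sum.swap)
  also have "\<dots> \<le> 2 * CARD('s)"
    using assms(5) sum_mono[of UNIV "total_molecularity y y'" "\<lambda>_. 2"] by simp
  finally have "sum size UNIV \<le> 2 * CARD('s)" .
  moreover have "2 \<le> size j" for j
    unfolding size_def using assms(4) proper by (simp add: non_flow_molecularity_ge_2)
  ultimately have "size k = 2"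
    by (rule all_eq_2_if_sum_le[rotated])
  hence "molecularity (y k) + molecularity (y' k) = 2" and "y k \<noteq> (\<lambda>_. 0)" and "y k \<noteq> y' k"
    using reactant_nonzero[OF M] proper by (simp_all add: size_def)
  then show "\<exists>A B. A \<noteq> B \<and>
           ((y k = (\<lambda>j. unit_cplx A j + unit_cplx B j) \<and> y' k = (\<lambda>_. 0)) \<or>
            (y k = unit_cplx A \<and> y' k = unit_cplx B))"
  proof (cases rule: reactions_of_size_2)
    case (distinct A B)
    then show ?thesis by blast
  next
    case (dimer A)
    have False
      by (rule no_dimerisation_to_zero[OF assms(2,3) TM spec[OF assms(5)] dimer])
    then show ?thesis ..
  qed
qed

end
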